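(* Assume the Setup and Matrix Notation below. Fix $i,j\in I$ and let $Z=\begin{pmatrix}P&Q\\R&S\end{pmatrix}$ be an $r\times r$ matrix over $\mathcal O_X(U_i\cap U_j)$, with $P$ of size $(r-2)\times(r-2)$, $Q$ of size $(r-2)\times 2$, $R$ of size $2\times(r-2)$, $S$ of size $2\times 2$. Then $M_i=ZM_j$ if and only if: (i) $P=P_{ij}=\Delta_{t_i}T'_i\Delta'_{t_j}$; (ii) $R=T''_i\Delta'_{t_j}$; (iii) $Q\,(f_j,g_j)^T=(-1)^{t_j}\,\Delta_{t_i}T'_i\,\mathbf s_j$; (iv) $S\,(f_j,g_j)^T=(-1)^{t_j}s_{jt_i}\,(f_i,g_i)^T$ (this holds in particular for $S=(-1)^{t_j}s_{jt_i}A_{ij}$). Moreover, such a matrix $Z$ always exists, and can be taken with $S=(-1)^{t_j}s_{jt_i}A_{ij}$; for any $Z$ satisfying (i)–(iv) with $S=(-1)^{t_j}s_{jt_i}A_{ij}$, one has $\det S=(-1)^{t_i}s_{jt_i}h_{ij}$ and $\det Z=h_{ij}$.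
   Context: Setup. $k$ is an algebraically closed field, $X$ a smooth irreducible algebraic variety over $k$, $Y\subset X$ a local complete intersection subscheme of codimension two with ideal sheaf $\mathcal J$ and normal bundle $N$, $L$ a line bundle on $X$, $r\ge 2$ an integer, and $s_1,\dots,s_{r-1}$ global sections generating $\bigwedge^2N\otimes L^*|_Y$. A bar denotes the class modulo the ideal of $Y$. $\{U_i\}_{i\in I}$ is a cover of $X$ by affine open sets such that: (a) $L|_{U_i}$ is trivial, with transition functions $h_{ij}\in\mathcal O_X(U_i\cap U_j)^\times$, $h_{ij}h_{jk}=h_{ik}$; (b) $f_i,g_i\in\mathcal O_X(U_i)$ generate $\mathcal J(U_i)$ (with $f_i=1,g_i=0$ if $Y\cap U_i=\emptyset$), and for every affine open $V\subseteq U_i$ and $u,v\in\mathcal O_X(V)$ with $uf_i=vg_i$ there is $w\in\mathcal O_X(V)$ with $u=wg_i$, $v=wf_i$; (c) for all $i,j$, $A_{ij}$ is a $2\times2$ matrix over $\mathcal O_X(U_i\cap U_j)$ with $(f_i,g_i)^T=A_{ij}(f_j,g_j)^T$; (d) $s_{it}\in\mathcal O_X(U_i)$ ($t=1,\dots,r-1$) satisfy $\bar s_{it}=\frac{\det\bar A_{ij}}{\bar h_{ij}}\bar s_{jt}$ on $Y\cap U_i\cap U_j$ (they represent $s_t$ locally); (e) there are indices $t_i\in\{1,\dots,r-1\}$ with $s_{it_i}=(-1)^{t_i}$, and for all $i,j$ the function $s_{jt_i}$ is a unit on $U_i\cap U_j$ and $\det A_{ij}=(-1)^{t_i}h_{ij}/s_{jt_i}$.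 Matrix Notation. $\Delta_t$ is the identity matrix (size clear from context) with its $t$-th row removed and $\Delta'_t$ its transpose; thus $\Delta_tM$ is $M$ without its $t$-th row and $M\Delta'_t$ is $M$ without its $t$-th column. $\mathbf s_i=(s_{i1},\dots,s_{i,r-1})^T$. $T'_i$ is the $(r-1)\times(r-1)$ matrix equal to the identity except for its $t_i$-th column, whose $t_i$-th entry is $1$ and whose $t$-th entry is $-(-1)^{t_i}s_{it}$ for $t\ne t_i$. $T''_i$ is the $2\times(r-1)$ matrix whose $t_i$-th column is $(f_i,g_i)^T$ and whose other columns are zero. $M_i=\begin{pmatrix}\Delta_{t_i}T'_i\\ T''_i\end{pmatrix}$ (an $r\times(r-1)$ matrix). $P_{ij}=\Delta_{t_i}T'_i\Delta'_{t_j}$. *)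

theory Defs
  imports "Jordan_Normal_Form.Determinant"
begin

text \<open>The paper's indices t are 1-based (t in {1..r-1}); the t-th row/column of the
  paper is row/column t-1 here.  A sequence s_1,...,s_{r-1} is a function
  s :: nat => 'a evaluated at 1..r-1.\<close>

text \<open>Delta_t: the n x n identity matrix with its t-th row removed ((n-1) x n).\<close>
definition delta_mat :: "nat \<Rightarrow> nat \<Rightarrow> 'a::{zero,one} mat" where
  "delta_mat n t = mat (n - 1) n
     (\<lambda>(a, b). if b = (if a < t - 1 then a else Suc a) then 1 else 0)"

definition delta'_mat :: "nat \<Rightarrow> nat \<Rightarrow> 'a::{zero,one} mat" where
  "delta'_mat n t = transpose_mat (delta_mat n t)"

definition svec :: "nat \<Rightarrow> (nat \<Rightarrow> 'a) \<Rightarrow> 'a mat" where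
  "svec r s = mat (r - 1) 1 (\<lambda>(a, _). s (Suc a))"

definition col2 :: "'a \<Rightarrow> 'a \<Rightarrow> 'a mat" where
  "col2 f g = mat 2 1 (\<lambda>(a, _). if a = 0 then f else g)"

definition Tprime :: "nat \<Rightarrow> (nat \<Rightarrow> 'a::comm_ring_1) \<Rightarrow> nat \<Rightarrow> 'a mat" where
  "Tprime r s t = mat (r - 1) (r - 1)
     (\<lambda>(a, b). if b = t - 1
               then (if a = t - 1 then 1 else - ((-1) ^ t * s (Suc a)))
               else (if a = b then 1 else 0))"

definition Tsecond :: "nat \<Rightarrow> 'a::zero \<Rightarrow> 'a \<Rightarrow> nat \<Rightarrow> 'a mat" where
  "Tsecond r f g t = mat 2 (r - 1)
     (\<lambda>(a, b). if b = t - 1 then (if a = 0 then f else g) else 0)"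

definition Mmat :: "nat \<Rightarrow> (nat \<Rightarrow> 'a::comm_ring_1) \<Rightarrow> nat \<Rightarrow> 'a \<Rightarrow> 'a \<Rightarrow> 'a mat" where
  "Mmat r s t f g = (delta_mat (r - 1) t * Tprime r s t) @\<^sub>r Tsecond r f g t"

end

theory Submission
  imports Defs
begin

text \<open>
  The columns of \<open>M_j\<close> other than column \<open>t_j\<close> are standard basis vectors, so
  \<open>M_j \<Delta>'_{t_j}\<close> is the identity on top of a zero block, while \<open>M_j s_j = (-1)^{t_j} (0, f_j, g_j)^T\<close>.
  As \<open>s_{j t_j}\<close> is a unit, a matrix \<open>N\<close> equals \<open>Z M_j\<close> iff \<open>N \<Delta>'_{t_j} = Z M_j \<Delta>'_{t_j}\<close> and
  \<open>N s_j = Z M_j s_j\<close>; for \<open>N = M_i\<close> the first equation is (i) and (ii), the second (iii) and (iv).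
  By (d) every entry of \<open>\<Delta>_{t_i} T'_i s_j\<close> lies in the ideal \<open>(f_j, g_j)\<close>, which yields \<open>Q\<close>.

  For the determinant, \<open>Z\<close> arises from a bordering of \<open>T'_i\<close> by deleting row \<open>t_i\<close> and
  column \<open>t_j\<close>, and all columns of \<open>T'_i\<close> but the \<open>t_i\<close>-th are standard basis vectors.
  Expanding along them leaves \<open>det S\<close> if \<open>t_i = t_j\<close>, and otherwise the determinant of \<open>S\<close>
  bordered by \<open>\<alpha> = -(-1)^{t_i} s_{i t_j}\<close>, the pivot row \<open>q\<close> of \<open>Q\<close> and \<open>(f_i, g_i)^T\<close>.
  Because \<open>(f_i, g_i)^T = A (f_j, g_j)^T\<close> and \<open>S = \<kappa> A\<close>, this bordered determinant equals
  \<open>\<kappa> det A (\<kappa> \<alpha> - q (f_j, g_j)^T)\<close>, and (iii) makes the last factor \<open>-1\<close>.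
\<close>

section \<open>Deleting rows and columns\<close>

lemma insert_index_less: "x < n - 1 \<Longrightarrow> insert_index i x < n"
  unfolding insert_index_def by auto

lemma insert_index_eq_iff: "insert_index i x = insert_index i y \<longleftrightarrow> x = y"
  unfolding insert_index_def by auto

lemma insert_index_neq: "insert_index i x \<noteq> i"
  unfolding insert_index_def by simp

lemma insert_index_delete_index_commute:
  "i \<noteq> i' \<Longrightarrow> insert_index i (insert_index (delete_index i i') x)
    = insert_index i' (insert_index (delete_index i' i) x)"
  unfolding insert_index_def delete_index_def by auto

lemma insert_index_eq_iff_delete_index:
  "b \<noteq> p \<Longrightarrow> insert_index p x = b \<longleftrightarrow> x = delete_index p b"
  unfolding insert_index_def delete_index_def by auto

lemma delete_index_add_delete_index:
  "p \<noteq> b \<Longrightarrow> delete_index p b + delete_index b p + 1 = p + b"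
  unfolding delete_index_def by auto

lemma delete_index_inj_eq:
  "p \<noteq> b \<Longrightarrow> q \<noteq> b \<Longrightarrow> delete_index b p = delete_index b q \<longleftrightarrow> p = q"
  unfolding delete_index_def by auto

lemma index_mat_delete [simp]:
  "x < dim_row A - 1 \<Longrightarrow> y < dim_col A - 1 \<Longrightarrow>
    mat_delete A i j $$ (x, y) = A $$ (insert_index i x, insert_index j y)"
  unfolding mat_delete_def insert_index_def by simp

lemma mat_delete_mat_delete_commute:
  assumes "i \<noteq> i'" and "j \<noteq> j'"
  shows "mat_delete (mat_delete A i j) (delete_index i i') (delete_index j j')
    = mat_delete (mat_delete A i' j') (delete_index i' i) (delete_index j' j)"
proof (rule eq_matI)
  fix x y
  assume "x < dim_row (mat_delete (mat_delete A i' j') (delete_index i' i) (delete_index j' j))"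
    and "y < dim_col (mat_delete (mat_delete A i' j') (delete_index i' i) (delete_index j' j))"
  then show "mat_delete (mat_delete A i j) (delete_index i i') (delete_index j j') $$ (x, y)
    = mat_delete (mat_delete A i' j') (delete_index i' i) (delete_index j' j) $$ (x, y)"
    by (simp add: insert_index_less insert_index_delete_index_commute[OF assms(1)]
        insert_index_delete_index_commute[OF assms(2)])
qed simp_all

definition submat :: "'a mat \<Rightarrow> nat list \<Rightarrow> nat list \<Rightarrow> 'a mat" where
  "submat A is js = mat (length is) (length js) (\<lambda>(i, j). A $$ (is ! i, js ! j))"

lemma submat_mat_delete:
  assumes "\<forall>x \<in> set xs. x < dim_row A - 1" and "\<forall>y \<in> set ys. y < dim_col A - 1"
  shows "submat (mat_delete A i j) xs ys = submat A (map (insert_index i) xs) (map (insert_index j) ys)"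
  using assms by (intro eq_matI) (auto simp: submat_def)

lemma sum_indicator_mult:
  assumes "finite A"
  shows "(\<Sum>i\<in>A. (if i = k then 1 else 0) * f i) = (if k \<in> A then f k else (0::'a::semiring_1))"
proof -
  have "(\<Sum>i\<in>A. (if i = k then 1 else 0) * f i) = (\<Sum>i\<in>A. if i = k then f i else 0)"
    by (rule sum.cong) simp_all
  then show ?thesis
    using assms by simp
qed

lemma index_delta_mat:
  "a < n - 1 \<Longrightarrow> b < n \<Longrightarrow> delta_mat n t $$ (a, b) = (if b = insert_index (t - 1) a then 1 else 0)"
  unfolding delta_mat_def insert_index_def by simp

lemma dim_delta_mat [simp]:
  "dim_row (delta_mat n t) = n - 1" "dim_col (delta_mat n t) = n"
  unfolding delta_mat_def by (rule dim_row_mat dim_col_mat)+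

lemma dim_delta'_mat [simp]:
  "dim_row (delta'_mat n t) = n" "dim_col (delta'_mat n t) = n - 1"
  unfolding delta'_mat_def by simp_all

lemma delta_mat_carrier: "delta_mat n t \<in> carrier_mat (n - 1) n"
  and delta'_mat_carrier: "delta'_mat n t \<in> carrier_mat n (n - 1)"
  by (rule carrier_matI; simp)+

lemma delta_mat_mult:
  fixes X :: "'a::comm_ring_1 mat"
  assumes "X \<in> carrier_mat n nc"
  shows "delta_mat n t * X = mat (n - 1) nc (\<lambda>(a, b). X $$ (insert_index (t - 1) a, b))"
  using assms insert_index_less
  by (intro eq_matI) (auto simp: scalar_prod_def index_delta_mat sum_indicator_mult)

lemma mult_delta'_mat:
  fixes X :: "'a::comm_ring_1 mat"
  assumes "X \<in> carrier_mat m n"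
  shows "X * delta'_mat n t = mat m (n - 1) (\<lambda>(a, b). X $$ (a, insert_index (t - 1) b))"
  using assms insert_index_less
  by (intro eq_matI)
    (auto simp: delta'_mat_def scalar_prod_def index_delta_mat mult.commute[of "X $$ _"]
      sum_indicator_mult)

lemma delta_mat_mult_delta'_mat:
  fixes X :: "'a::comm_ring_1 mat"
  assumes "X \<in> carrier_mat n n'"
  shows "delta_mat n t * X * delta'_mat n' t' = mat_delete X (t - 1) (t' - 1)"
  unfolding delta_mat_mult[OF assms] mult_delta'_mat[OF mat_carrier]
  using assms by (intro eq_matI) (simp_all add: insert_index_less)

lemma index_mult_col_remove:
  fixes M v :: "'a::comm_ring_1 mat"
  assumes "M \<in> carrier_mat m n" "v \<in> carrier_mat n 1" "a < m" "k < n"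
  shows "(M * v) $$ (a, 0) = M $$ (a, k) * v $$ (k, 0)
    + (\<Sum>b \<in> {..<n} - {k}. M $$ (a, b) * v $$ (b, 0))"
proof -
  have "(M * v) $$ (a, 0) = (\<Sum>b<n. M $$ (a, b) * v $$ (b, 0))"
    using assms by (simp add: scalar_prod_def atLeast0LessThan)
  then show ?thesis
    using assms(4) by (simp add: sum.remove)
qed

lemma mat_eq_iff_mult_delta'_mat_and_col:
  fixes X Y :: "'a::comm_ring_1 mat"
  assumes X: "X \<in> carrier_mat m n" and Y: "Y \<in> carrier_mat m n" and t: "t \<in> {1..n}"
    and v: "v \<in> carrier_mat n 1" and unit: "v $$ (t - 1, 0) * u = 1"
  shows "X = Y \<longleftrightarrow> X * delta'_mat n t = Y * delta'_mat n t \<and> X * v = Y * v"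
proof (intro iffI conjI; (elim conjE)?)
  assume del: "X * delta'_mat n t = Y * delta'_mat n t" and col: "X * v = Y * v"
  have off_pivot: "X $$ (a, b) = Y $$ (a, b)" if "a < m" "b < n" "b \<noteq> t - 1" for a b
  proof -
    have b: "delete_index (t - 1) b < n - 1"
      using that t by (auto simp: delete_index_def)
    then have "(X * delta'_mat n t) $$ (a, delete_index (t - 1) b)
        = (Y * delta'_mat n t) $$ (a, delete_index (t - 1) b)"
      by (simp add: del)
    then show ?thesis
      using X Y that b by (simp add: mult_delta'_mat insert_delete_index)
  qed
  show "X = Y"
  proof (rule eq_matI)
    fix a b assume a: "a < dim_row Y" and b: "b < dim_col Y"
    show "X $$ (a, b) = Y $$ (a, b)"
    proof (cases "b = t - 1")
      case True
      have a: "a < m" and k: "t - 1 < n"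
        using a Y t by auto
      have "X $$ (a, t - 1) * v $$ (t - 1, 0) + (\<Sum>b \<in> {..<n} - {t - 1}. X $$ (a, b) * v $$ (b, 0))
          = Y $$ (a, t - 1) * v $$ (t - 1, 0) + (\<Sum>b \<in> {..<n} - {t - 1}. Y $$ (a, b) * v $$ (b, 0))"
        using index_mult_col_remove[OF X v a k] index_mult_col_remove[OF Y v a k] col by metis
      moreover have "(\<Sum>b \<in> {..<n} - {t - 1}. X $$ (a, b) * v $$ (b, 0))
          = (\<Sum>b \<in> {..<n} - {t - 1}. Y $$ (a, b) * v $$ (b, 0))"
        using off_pivot a by (intro sum.cong) auto
      ultimately have "X $$ (a, t - 1) * v $$ (t - 1, 0) * u = Y $$ (a, t - 1) * v $$ (t - 1, 0) * u"
        by simp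
      then show ?thesis
        using True unit by (simp add: mult.assoc)
    qed (use a b Y off_pivot in auto)
  qed (use X Y in auto)
qed simp_all

lemma append_rows_mult:
  assumes "A \<in> carrier_mat n1 nc" and "B \<in> carrier_mat n2 nc" and "X \<in> carrier_mat nc k"
  shows "(A @\<^sub>r B) * X = (A * X) @\<^sub>r (B * X)"
  using assms by (intro eq_matI) (auto simp: append_rows_def scalar_prod_def intro!: sum.cong)

lemma four_block_mat_mult_append_rows:
  assumes "A \<in> carrier_mat n1 m1" "B \<in> carrier_mat n1 m2" "C \<in> carrier_mat n2 m1"
    "D \<in> carrier_mat n2 m2" "X \<in> carrier_mat m1 k" "Y \<in> carrier_mat m2 k"
  shows "four_block_mat A B C D * (X @\<^sub>r Y) = (A * X + B * Y) @\<^sub>r (C * X + D * Y)"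
  unfolding append_rows_def using assms
  by (subst mult_four_block_mat[of _ n1 m1 _ m2 _ n2 _ _ k _ 0]) auto

lemma append_rows_eq_iff:
  assumes "A \<in> carrier_mat n1 nc" "C \<in> carrier_mat n1 nc"
    "B \<in> carrier_mat n2 nc" "D \<in> carrier_mat n2 nc"
  shows "A @\<^sub>r B = C @\<^sub>r D \<longleftrightarrow> A = C \<and> B = D"
proof
  assume eq: "A @\<^sub>r B = C @\<^sub>r D"
  show "A = C \<and> B = D"
  proof
    show "A = C"
    proof (rule eq_matI)
      fix i j assume "i < dim_row C" "j < dim_col C"
      then show "A $$ (i, j) = C $$ (i, j)"
        using assms arg_cong[OF eq, of "\<lambda>M. M $$ (i, j)"] by (simp add: append_rows_def)
    qed (use assms in auto)
    show "B = D"
    proof (rule eq_matI)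
      fix i j assume "i < dim_row D" "j < dim_col D"
      then show "B $$ (i, j) = D $$ (i, j)"
        using assms arg_cong[OF eq, of "\<lambda>M. M $$ (n1 + i, j)"] by (simp add: append_rows_def)
    qed (use assms in auto)
  qed
qed simp

lemma four_block_mat_carrier_minus_2:
  assumes "2 \<le> r" "P \<in> carrier_mat (r - 2) (r - 2)" "S \<in> carrier_mat 2 2"
  shows "four_block_mat P Q R S \<in> carrier_mat r r"
proof -
  have "r - 2 + 2 = r"
    using assms(1) by simp
  then show ?thesis
    using four_block_carrier_mat[OF assms(2,3)] by metis
qed

lemma smult_smult_mat: "a \<cdot>\<^sub>m (b \<cdot>\<^sub>m A) = (a * b :: 'a::semigroup_mult) \<cdot>\<^sub>m A"
  by (intro eq_matI) (simp_all add: mult.assoc)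

lemma eq_smult_mat_iff_involutive:
  assumes "c * c = (1::'a::comm_ring_1)"
  shows "X = c \<cdot>\<^sub>m Y \<longleftrightarrow> c \<cdot>\<^sub>m X = Y"
proof -
  have "c \<cdot>\<^sub>m (c \<cdot>\<^sub>m M) = M" for M :: "'a mat"
    using assms by (intro eq_matI) (auto simp: mult.assoc[symmetric])
  then show ?thesis
    by metis
qed

lemma dim_Tprime [simp]: "dim_row (Tprime r s t) = r - 1" "dim_col (Tprime r s t) = r - 1"
  unfolding Tprime_def by (rule dim_row_mat dim_col_mat)+

lemma Tprime_carrier: "Tprime r s t \<in> carrier_mat (r - 1) (r - 1)"
  by (rule carrier_matI) simp_all

lemma index_Tprime:
  "x < r - 1 \<Longrightarrow> y < r - 1 \<Longrightarrow> Tprime r s t $$ (x, y) =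
    (if y = t - 1 then (if x = t - 1 then 1 else - ((-1) ^ t * s (Suc x)))
     else (if x = y then 1 else 0))"
  unfolding Tprime_def by simp

lemma dim_Tsecond [simp]: "dim_row (Tsecond r f g t) = 2" "dim_col (Tsecond r f g t) = r - 1"
  unfolding Tsecond_def by (rule dim_row_mat dim_col_mat)+

lemma Tsecond_carrier: "Tsecond r f g t \<in> carrier_mat 2 (r - 1)"
  by (rule carrier_matI) simp_all

lemma index_Tsecond:
  "c < 2 \<Longrightarrow> y < r - 1 \<Longrightarrow>
    Tsecond r f g t $$ (c, y) = (if y = t - 1 then (if c = 0 then f else g) else 0)"
  unfolding Tsecond_def by simp

lemma dim_svec [simp]: "dim_row (svec r s) = r - 1" "dim_col (svec r s) = 1"
  unfolding svec_def by (rule dim_row_mat dim_col_mat)+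

lemma svec_carrier: "svec r s \<in> carrier_mat (r - 1) 1"
  by (rule carrier_matI) simp_all

lemma index_svec: "x < r - 1 \<Longrightarrow> j < 1 \<Longrightarrow> svec r s $$ (x, j) = s (Suc x)"
  unfolding svec_def by simp

lemma dim_col2 [simp]: "dim_row (col2 f g) = 2" "dim_col (col2 f g) = 1"
  unfolding col2_def by (rule dim_row_mat dim_col_mat)+

lemma col2_carrier: "col2 f g \<in> carrier_mat 2 1"
  by (rule carrier_matI) simp_all

lemma index_col2: "c < 2 \<Longrightarrow> j < 1 \<Longrightarrow> col2 f g $$ (c, j) = (if c = 0 then f else g)"
  unfolding col2_def by simp

lemma Mmat_carrier:
  assumes "2 \<le> r"
  shows "Mmat r s t f g \<in> carrier_mat r (r - 1)"
proof -
  have "Mmat r s t f g \<in> carrier_mat (r - 1 - 1 + 2) (r - 1)"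
    unfolding Mmat_def
    by (rule carrier_append_rows[OF mult_carrier_mat[OF delta_mat_carrier Tprime_carrier]
        Tsecond_carrier])
  moreover have "r - 1 - 1 + 2 = r"
    using assms by simp
  ultimately show ?thesis
    by (simp only:)
qed

lemma mat_delete_Tprime_self: "mat_delete (Tprime r s t) (t - 1) (t - 1) = 1\<^sub>m (r - 2)"
  by (intro eq_matI) (auto simp: index_Tprime insert_index_less insert_index_neq insert_index_eq_iff)

lemma Tsecond_mult_delta'_mat_self:
  fixes f g :: "'a::comm_ring_1"
  shows "Tsecond r f g t * delta'_mat (r - 1) t = 0\<^sub>m 2 (r - 2)"
  unfolding mult_delta'_mat[OF Tsecond_carrier]
  by (intro eq_matI) (auto simp: index_Tsecond insert_index_less insert_index_neq)

lemma Mmat_mult_delta'_mat: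
  fixes s :: "nat \<Rightarrow> 'a::comm_ring_1"
  shows "Mmat r s t f g * delta'_mat (r - 1) t'
    = (delta_mat (r - 1) t * Tprime r s t * delta'_mat (r - 1) t') @\<^sub>r (Tsecond r f g t * delta'_mat (r - 1) t')"
  unfolding Mmat_def
  by (rule append_rows_mult[OF mult_carrier_mat[OF delta_mat_carrier Tprime_carrier] Tsecond_carrier
        delta'_mat_carrier])

lemma Mmat_mult_delta'_mat_self:
  fixes s :: "nat \<Rightarrow> 'a::comm_ring_1"
  shows "Mmat r s t f g * delta'_mat (r - 1) t = 1\<^sub>m (r - 2) @\<^sub>r 0\<^sub>m 2 (r - 2)"
  unfolding Mmat_mult_delta'_mat delta_mat_mult_delta'_mat[OF Tprime_carrier] mat_delete_Tprime_self
    Tsecond_mult_delta'_mat_self ..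

lemma Tprime_mult_svec:
  fixes s s' :: "nat \<Rightarrow> 'a::comm_ring_1"
  assumes t: "t \<in> {1..r - 1}"
  shows "Tprime r s t * svec r s' = mat (r - 1) 1 (\<lambda>(x, _).
    if x = t - 1 then s' t else s' (Suc x) - (-1) ^ t * s (Suc x) * s' t)"
proof (rule eq_matI)
  fix x j assume "x < dim_row (mat (r - 1) 1 (\<lambda>(x, _).
    if x = t - 1 then s' t else s' (Suc x) - (-1) ^ t * s (Suc x) * s' t))" and "j < dim_col (mat (r - 1) 1 (\<lambda>(x, _).
    if x = t - 1 then s' t else s' (Suc x) - (-1) ^ t * s (Suc x) * s' t))"
  then have x: "x < r - 1" and j: "j = 0"
    by simp_all
  have pivot: "t - 1 \<in> {..<r - 1}" and "Suc (t - 1) = t"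
    using t by auto
  have "(Tprime r s t * svec r s') $$ (x, j)
      = (\<Sum>y<r - 1. Tprime r s t $$ (x, y) * s' (Suc y))"
    using x j by (simp add: scalar_prod_def atLeast0LessThan index_svec)
  also have "\<dots> = Tprime r s t $$ (x, t - 1) * s' t
      + (\<Sum>y \<in> {..<r - 1} - {t - 1}. Tprime r s t $$ (x, y) * s' (Suc y))"
    using pivot \<open>Suc (t - 1) = t\<close> by (simp add: sum.remove)
  also have "(\<Sum>y \<in> {..<r - 1} - {t - 1}. Tprime r s t $$ (x, y) * s' (Suc y))
      = (\<Sum>y \<in> {..<r - 1} - {t - 1}. (if y = x then 1 else 0) * s' (Suc y))"
    using x by (intro sum.cong) (auto simp: index_Tprime)
  also have "\<dots> = (if x = t - 1 then 0 else s' (Suc x))"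
    using x by (simp add: sum_indicator_mult)
  also have "Tprime r s t $$ (x, t - 1) = (if x = t - 1 then 1 else - ((-1) ^ t * s (Suc x)))"
    using x pivot by (simp add: index_Tprime)
  finally show "(Tprime r s t * svec r s') $$ (x, j) = mat (r - 1) 1 (\<lambda>(x, _).
    if x = t - 1 then s' t else s' (Suc x) - (-1) ^ t * s (Suc x) * s' t) $$ (x, j)"
    using x j by simp
qed simp_all

lemma delta_Tprime_mult_svec:
  fixes s s' :: "nat \<Rightarrow> 'a::comm_ring_1"
  assumes "t \<in> {1..r - 1}"
  shows "delta_mat (r - 1) t * Tprime r s t * svec r s' = mat (r - 2) 1 (\<lambda>(a, _).
    s' (Suc (insert_index (t - 1) a)) - (-1) ^ t * s (Suc (insert_index (t - 1) a)) * s' t)"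
  unfolding assoc_mult_mat[OF delta_mat_carrier Tprime_carrier svec_carrier]
    Tprime_mult_svec[OF assms] delta_mat_mult[OF mat_carrier]
  by (intro eq_matI) (simp_all add: insert_index_less insert_index_neq)

lemma Tsecond_mult_svec:
  fixes s :: "nat \<Rightarrow> 'a::comm_ring_1"
  assumes t: "t \<in> {1..r - 1}"
  shows "Tsecond r f g t * svec r s = s t \<cdot>\<^sub>m col2 f g"
proof (rule eq_matI)
  fix c j assume "c < dim_row (s t \<cdot>\<^sub>m col2 f g)" and "j < dim_col (s t \<cdot>\<^sub>m col2 f g)"
  then have c: "c < 2" and j: "j = 0"
    by simp_all
  have "(Tsecond r f g t * svec r s) $$ (c, j)
      = (\<Sum>y<r - 1. (if y = t - 1 then 1 else 0) * ((if c = 0 then f else g) * s (Suc y)))"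
    using c j by (auto simp: scalar_prod_def atLeast0LessThan index_svec index_Tsecond intro!: sum.cong)
  also have "\<dots> = (if c = 0 then f else g) * s t"
    using t by (simp add: sum_indicator_mult less_diff_conv2)
  finally show "(Tsecond r f g t * svec r s) $$ (c, j) = (s t \<cdot>\<^sub>m col2 f g) $$ (c, j)"
    using c j by (simp add: index_col2 mult.commute)
qed simp_all

lemma Mmat_mult_svec:
  fixes s s' :: "nat \<Rightarrow> 'a::comm_ring_1"
  assumes "t \<in> {1..r - 1}"
  shows "Mmat r s t f g * svec r s'
    = (delta_mat (r - 1) t * Tprime r s t * svec r s') @\<^sub>r (s' t \<cdot>\<^sub>m col2 f g)"
  unfolding Mmat_def
    append_rows_mult[OF mult_carrier_mat[OF delta_mat_carrier Tprime_carrier] Tsecond_carrier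
      svec_carrier]
    Tsecond_mult_svec[OF assms] ..

section \<open>Determinants\<close>

lemma det_eq_cofactor_of_unit_col:
  assumes A: "A \<in> carrier_mat n n" and "a < n" and c: "c < n"
    and unit: "\<And>i. i < n \<Longrightarrow> A $$ (i, c) = (if i = a then 1 else 0)"
  shows "det A = (-1) ^ (a + c) * det (mat_delete A a c)"
proof -
  have "det A = (\<Sum>i<n. A $$ (i, c) * cofactor A i c)"
    by (rule laplace_expansion_column[OF A c])
  also have "\<dots> = (\<Sum>i<n. if i = a then cofactor A i c else 0)"
    by (rule sum.cong) (simp_all add: unit)
  also have "\<dots> = cofactor A a c"
    using \<open>a < n\<close> by simp
  finally show ?thesis by (simp add: cofactor_def)
qed

lemma neg_one_power_delete_index:
  assumes "p \<noteq> b" and "q \<noteq> b"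
  shows "(-1::'a::comm_ring_1) ^ (delete_index p b + delete_index q b)
    * (-1) ^ (delete_index b p + delete_index b q) = (-1) ^ (p + q)"
proof -
  have "delete_index p b + delete_index q b + (delete_index b p + delete_index b q) + 2
      = p + q + 2 * b"
    using delete_index_add_delete_index[OF assms(1)] delete_index_add_delete_index[OF assms(2)]
    by simp
  then have "(-1::'a) ^ (delete_index p b + delete_index q b + (delete_index b p + delete_index b q) + 2)
      = (-1) ^ (p + q + 2 * b)"
    by (simp only:)
  then show ?thesis
    by (simp add: power_add power_mult)
qed

lemma det_mat_delete_eq_of_unit_col:
  fixes B :: "'a::comm_ring_1 mat"
  assumes B: "B \<in> carrier_mat (Suc n) (Suc n)" and "p < Suc n" "q < Suc n"
    and b: "b < Suc n" "b \<noteq> p" "b \<noteq> q"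
    and unit: "\<And>a. a < Suc n \<Longrightarrow> B $$ (a, b) = (if a = b then 1 else 0)"
  shows "det (mat_delete B p q) = (-1) ^ (delete_index p b + delete_index q b)
    * det (mat_delete (mat_delete B b b) (delete_index b p) (delete_index b q))"
proof -
  have Z: "mat_delete B p q \<in> carrier_mat n n"
    using mat_delete_carrier[OF B] by simp
  have "det (mat_delete B p q) = (-1) ^ (delete_index p b + delete_index q b)
      * det (mat_delete (mat_delete B p q) (delete_index p b) (delete_index q b))"
  proof (rule det_eq_cofactor_of_unit_col[OF Z])
    fix x assume "x < n"
    then show "mat_delete B p q $$ (x, delete_index q b) = (if x = delete_index p b then 1 else 0)"
      using assms insert_index_less[of x "Suc n" p]
      by (simp add: insert_delete_index insert_index_eq_iff_delete_index delete_index_def)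
  qed (use assms in \<open>auto simp: delete_index_def\<close>)
  also have "mat_delete (mat_delete B p q) (delete_index p b) (delete_index q b)
      = mat_delete (mat_delete B b b) (delete_index b p) (delete_index b q)"
    using b by (intro mat_delete_mat_delete_commute) auto
  finally show ?thesis .
qed

lemma unit_cols_mat_delete:
  fixes B :: "'a::comm_ring_1 mat"
  assumes B: "B \<in> carrier_mat (Suc m + 2) (Suc m + 2)" and b: "b < Suc m" "b \<noteq> p"
    and unit: "\<And>a c. a < Suc m + 2 \<Longrightarrow> c < Suc m \<Longrightarrow> c \<noteq> p \<Longrightarrow> B $$ (a, c) = (if a = c then 1 else 0)"
    and "a < m + 2" "c < m" "c \<noteq> delete_index b p"
  shows "mat_delete B b b $$ (a, c) = (if a = c then 1 else 0)"
proof -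
  have "insert_index b c \<noteq> p" "insert_index b c < Suc m" "insert_index b a < Suc m + 2"
    using assms(5-7) b by (auto simp: insert_index_def delete_index_def)
  then show ?thesis
    using B unit assms(5,6) by (simp add: insert_index_eq_iff)
qed

lemma det_mat_delete_of_unit_cols_base:
  fixes B :: "'a::comm_ring_1 mat"
  assumes "B \<in> carrier_mat (Suc m + 2) (Suc m + 2)" and "p < Suc m" and "q < Suc m"
    and "p = q \<and> m = 0 \<or> p \<noteq> q \<and> m = 1"
  shows "det (mat_delete B p q) =
    (if p = q then det (submat B [Suc m, Suc m + 1] [Suc m, Suc m + 1])
     else (-1) ^ (p + q + 1) * det (submat B [q, Suc m, Suc m + 1] [p, Suc m, Suc m + 1]))"
proof -
  have "mat_delete B p q = (if p = q then submat B [Suc m, Suc m + 1] [Suc m, Suc m + 1]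
      else submat B [q, Suc m, Suc m + 1] [p, Suc m, Suc m + 1])"
    using assms by (intro eq_matI) (auto simp: submat_def less_Suc_eq numeral_3_eq_3 insert_index_def)
  moreover have "p = q \<or> p + q + 1 = 2"
    using assms(2-4) by auto
  ultimately show ?thesis
    by auto
qed

lemma det_mat_delete_of_unit_cols:
  fixes B :: "'a::comm_ring_1 mat"
  assumes "B \<in> carrier_mat (m + 2) (m + 2)" and "p < m" and "q < m"
    and "\<And>a b. a < m + 2 \<Longrightarrow> b < m \<Longrightarrow> b \<noteq> p \<Longrightarrow> B $$ (a, b) = (if a = b then 1 else 0)"
  shows "det (mat_delete B p q) =
    (if p = q then det (submat B [m, m + 1] [m, m + 1])
     else (-1) ^ (p + q + 1) * det (submat B [q, m, m + 1] [p, m, m + 1]))"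
  using assms
proof (induction m arbitrary: B p q)
  case 0
  then show ?case by simp
next
  case (Suc m)
  show ?case
  proof (cases "p = q \<and> m = 0 \<or> p \<noteq> q \<and> m = 1")
    case True
    then show ?thesis
      using det_mat_delete_of_unit_cols_base Suc.prems(1-3) by blast
  next
    case False
    with Suc.prems(2,3) have "\<exists>b<Suc m. b \<noteq> p \<and> b \<noteq> q"
      by presburger
    then obtain b where b: "b < Suc m" "b \<noteq> p" "b \<noteq> q"
      by blast
    let ?B' = "mat_delete B b b"
    have "det (mat_delete B p q) = (-1) ^ (delete_index p b + delete_index q b)
        * det (mat_delete ?B' (delete_index b p) (delete_index b q))"
      by (rule det_mat_delete_eq_of_unit_col[where n = "Suc m + 1"]) (use Suc.prems b in auto)
    also have "det (mat_delete ?B' (delete_index b p) (delete_index b q))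
        = (if delete_index b p = delete_index b q then det (submat ?B' [m, m + 1] [m, m + 1])
           else (-1) ^ (delete_index b p + delete_index b q + 1)
             * det (submat ?B' [delete_index b q, m, m + 1] [delete_index b p, m, m + 1]))"
      using Suc.prems b
      by (intro Suc.IH unit_cols_mat_delete[OF Suc.prems(1) b(1,2) Suc.prems(4)])
        (auto simp: mat_delete_def delete_index_def)
    also have "submat ?B' [m, m + 1] [m, m + 1] = submat B [Suc m, Suc m + 1] [Suc m, Suc m + 1]"
      using Suc.prems(1) b by (simp add: submat_mat_delete)
    also have "submat ?B' [delete_index b q, m, m + 1] [delete_index b p, m, m + 1]
        = submat B [q, Suc m, Suc m + 1] [p, Suc m, Suc m + 1]"
      using Suc.prems(1-3) b by (simp add: submat_mat_delete insert_delete_index delete_index_def)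
    also note delete_index_inj_eq[OF b(2)[symmetric] b(3)[symmetric]]
    finally have "det (mat_delete B p q) = (-1) ^ (delete_index p b + delete_index q b)
      * (if p = q then det (submat B [Suc m, Suc m + 1] [Suc m, Suc m + 1])
         else (-1) ^ (delete_index b p + delete_index b q + 1)
           * det (submat B [q, Suc m, Suc m + 1] [p, Suc m, Suc m + 1]))" .
    moreover have "(-1::'a) ^ (delete_index p b + delete_index q b)
        * (-1) ^ (delete_index b p + delete_index b q + 1) = (-1) ^ (p + q + 1)"
      using neg_one_power_delete_index[of p b q] b by simp
    ultimately show ?thesis
      by (simp add: mult.assoc[symmetric])
  qed
qed

lemma det_2x2:
  fixes A :: "'a::comm_ring_1 mat"
  assumes A: "A \<in> carrier_mat 2 2"
  shows "det A = A $$ (0, 0) * A $$ (1, 1) - A $$ (0, 1) * A $$ (1, 0)"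
proof -
  have "det A = (\<Sum>i<2. A $$ (i, 0) * cofactor A i 0)"
    by (rule laplace_expansion_column[OF A]) simp
  also have "\<dots> = A $$ (0, 0) * det (mat_delete A 0 0) - A $$ (1, 0) * det (mat_delete A 1 0)"
    by (simp add: cofactor_def numeral_2_eq_2)
  also have "det (mat_delete A 0 0) = A $$ (1, 1)"
    using A by (simp add: det_single mat_delete_carrier[OF A, simplified] insert_index_def)
  also have "det (mat_delete A 1 0) = A $$ (0, 1)"
    using A by (simp add: det_single mat_delete_carrier[OF A, simplified] insert_index_def)
  finally show ?thesis
    by (simp add: algebra_simps)
qed

lemma det_3x3:
  fixes A :: "'a::comm_ring_1 mat"
  assumes A: "A \<in> carrier_mat 3 3"
  shows "det A = A $$ (0, 0) * (A $$ (1, 1) * A $$ (2, 2) - A $$ (1, 2) * A $$ (2, 1))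
     - A $$ (1, 0) * (A $$ (0, 1) * A $$ (2, 2) - A $$ (0, 2) * A $$ (2, 1))
     + A $$ (2, 0) * (A $$ (0, 1) * A $$ (1, 2) - A $$ (0, 2) * A $$ (1, 1))"
proof -
  have del: "mat_delete A i 0 \<in> carrier_mat 2 2" for i
    using mat_delete_carrier[OF A] by simp
  have "det A = (\<Sum>i<3. A $$ (i, 0) * cofactor A i 0)"
    by (rule laplace_expansion_column[OF A]) simp
  also have "\<dots> = A $$ (0, 0) * det (mat_delete A 0 0) - A $$ (1, 0) * det (mat_delete A 1 0)
      + A $$ (2, 0) * det (mat_delete A 2 0)"
    by (simp add: cofactor_def numeral_3_eq_3 numeral_2_eq_2)
  also have "det (mat_delete A 0 0) = A $$ (1, 1) * A $$ (2, 2) - A $$ (1, 2) * A $$ (2, 1)"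
    using A by (simp add: det_2x2[OF del] insert_index_def numeral_2_eq_2)
  also have "det (mat_delete A 1 0) = A $$ (0, 1) * A $$ (2, 2) - A $$ (0, 2) * A $$ (2, 1)"
    using A by (simp add: det_2x2[OF del] insert_index_def numeral_2_eq_2)
  also have "det (mat_delete A 2 0) = A $$ (0, 1) * A $$ (1, 2) - A $$ (0, 2) * A $$ (1, 1)"
    using A by (simp add: det_2x2[OF del] insert_index_def numeral_2_eq_2)
  finally show ?thesis .
qed

lemma mult_col2:
  fixes A :: "'a::comm_ring_1 mat"
  assumes "A \<in> carrier_mat 2 2"
  shows "A * col2 x y = col2 (A $$ (0, 0) * x + A $$ (0, 1) * y) (A $$ (1, 0) * x + A $$ (1, 1) * y)"
  using assms by (intro eq_matI) (auto simp: col2_def scalar_prod_def numeral_2_eq_2 less_Suc_eq)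

lemma det_bordered_smult_mat:
  fixes A :: "'a::comm_ring_1 mat"
  assumes A: "A \<in> carrier_mat 2 2" and fg: "col2 f g = A * col2 x y"
  shows "det (four_block_mat (mat 1 1 (\<lambda>_. \<alpha>)) (mat 1 2 (\<lambda>(_, c). w c)) (col2 f g) (\<kappa> \<cdot>\<^sub>m A))
    = \<kappa> * det A * (\<kappa> * \<alpha> - (w 0 * x + w 1 * y))"
proof -
  have "f = A $$ (0, 0) * x + A $$ (0, 1) * y" and "g = A $$ (1, 0) * x + A $$ (1, 1) * y"
    using arg_cong[OF fg[unfolded mult_col2[OF A]], of "\<lambda>M. M $$ (0, 0)"]
      arg_cong[OF fg[unfolded mult_col2[OF A]], of "\<lambda>M. M $$ (1, 0)"]
    by (simp_all add: index_col2)
  moreover have "four_block_mat (mat 1 1 (\<lambda>_. \<alpha>)) (mat 1 2 (\<lambda>(_, c). w c)) (col2 f g) (\<kappa> \<cdot>\<^sub>m A)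
      \<in> carrier_mat 3 3"
    using four_block_carrier_mat[OF mat_carrier[of 1 1 "\<lambda>_. \<alpha>"] smult_carrier_mat[OF A, of \<kappa>]]
    by (simp add: numeral_3_eq_3)
  ultimately show ?thesis
    using A by (simp add: det_3x3 det_2x2 index_col2 numeral_2_eq_2 algebra_simps)
qed

lemma det_smult_mat_2x2:
  fixes A :: "'a::comm_ring_1 mat"
  assumes "A \<in> carrier_mat 2 2" and "\<sigma> * u = 1" and "det A = \<epsilon> * h * u" and "c * c = 1"
  shows "det ((c * \<sigma>) \<cdot>\<^sub>m A) = \<epsilon> * \<sigma> * h"
proof -
  have "det ((c * \<sigma>) \<cdot>\<^sub>m A) = (c * c) * \<sigma> * \<epsilon> * h * (\<sigma> * u)"
    using assms(1,3) by (simp add: power2_eq_square algebra_simps)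
  then show ?thesis
    using assms(2,4) by (simp add: algebra_simps)
qed

section \<open>The transition matrix\<close>

lemma four_block_mult_Mmat_mult_delta'_mat:
  fixes P Q R S :: "'a::comm_ring_1 mat"
  assumes r: "2 \<le> r"
    and P: "P \<in> carrier_mat (r - 2) (r - 2)" and Q: "Q \<in> carrier_mat (r - 2) 2"
    and R: "R \<in> carrier_mat 2 (r - 2)" and S: "S \<in> carrier_mat 2 2"
  shows "four_block_mat P Q R S * Mmat r s t f g * delta'_mat (r - 1) t = P @\<^sub>r R"
proof -
  have "four_block_mat P Q R S * Mmat r s t f g * delta'_mat (r - 1) t
      = four_block_mat P Q R S * (Mmat r s t f g * delta'_mat (r - 1) t)"
    by (rule assoc_mult_mat[OF four_block_mat_carrier_minus_2[OF r P S] Mmat_carrier[OF r]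
          delta'_mat_carrier])
  also have "Mmat r s t f g * delta'_mat (r - 1) t = 1\<^sub>m (r - 2) @\<^sub>r 0\<^sub>m 2 (r - 2)"
    by (rule Mmat_mult_delta'_mat_self)
  also have "four_block_mat P Q R S * (1\<^sub>m (r - 2) @\<^sub>r 0\<^sub>m 2 (r - 2)) = P @\<^sub>r R"
    using P Q R S
    by (simp add: four_block_mat_mult_append_rows[OF P Q R S one_carrier_mat zero_carrier_mat])
  finally show ?thesis .
qed

lemma four_block_mult_Mmat_mult_svec:
  fixes P Q R S :: "'a::comm_ring_1 mat"
  assumes r: "2 \<le> r" and t: "t \<in> {1..r - 1}" and pivot: "s t = (-1) ^ t"
    and P: "P \<in> carrier_mat (r - 2) (r - 2)" and Q: "Q \<in> carrier_mat (r - 2) 2"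
    and R: "R \<in> carrier_mat 2 (r - 2)" and S: "S \<in> carrier_mat 2 2"
  shows "four_block_mat P Q R S * Mmat r s t f g * svec r s
    = ((-1) ^ t \<cdot>\<^sub>m (Q * col2 f g)) @\<^sub>r ((-1) ^ t \<cdot>\<^sub>m (S * col2 f g))"
proof -
  have "(-1::'a) ^ t * (-1) ^ t = 1"
    by (simp flip: power_add)
  then have "(-1) ^ t * x * (-1) ^ t = x" for x :: 'a
    by (metis mult.commute mult.left_commute mult_1_right)
  then have "delta_mat (r - 1) t * Tprime r s t * svec r s = 0\<^sub>m (r - 2) 1"
    unfolding delta_Tprime_mult_svec[OF t] using pivot by (intro eq_matI) auto
  then have "Mmat r s t f g * svec r s = 0\<^sub>m (r - 2) 1 @\<^sub>r ((-1) ^ t \<cdot>\<^sub>m col2 f g)"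
    by (simp add: Mmat_mult_svec[OF t] pivot)
  moreover have "four_block_mat P Q R S * Mmat r s t f g * svec r s
      = four_block_mat P Q R S * (Mmat r s t f g * svec r s)"
    by (rule assoc_mult_mat[OF four_block_mat_carrier_minus_2[OF r P S] Mmat_carrier[OF r]
          svec_carrier])
  ultimately have "four_block_mat P Q R S * Mmat r s t f g * svec r s
      = four_block_mat P Q R S * (0\<^sub>m (r - 2) 1 @\<^sub>r ((-1) ^ t \<cdot>\<^sub>m col2 f g))"
    by simp
  also have "\<dots> = ((-1) ^ t \<cdot>\<^sub>m (Q * col2 f g)) @\<^sub>r ((-1) ^ t \<cdot>\<^sub>m (S * col2 f g))"
    unfolding four_block_mat_mult_append_rows[OF P Q R S zero_carrier_mat[of "r - 2" 1]
        smult_carrier_mat[OF col2_carrier]]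
      mult_smult_distrib[OF Q col2_carrier] mult_smult_distrib[OF S col2_carrier]
    using P R mult_carrier_mat[OF Q col2_carrier] mult_carrier_mat[OF S col2_carrier] by simp
  finally show ?thesis .
qed

lemma Mmat_eq_four_block_mult_Mmat_iff:
  fixes si sj :: "nat \<Rightarrow> 'a::comm_ring_1"
  assumes r: "2 \<le> r" and ti: "ti \<in> {1..r - 1}" and tj: "tj \<in> {1..r - 1}"
    and pivot: "sj tj = (-1) ^ tj"
    and P: "P \<in> carrier_mat (r - 2) (r - 2)" and Q: "Q \<in> carrier_mat (r - 2) 2"
    and R: "R \<in> carrier_mat 2 (r - 2)" and S: "S \<in> carrier_mat 2 2"
  shows "Mmat r si ti fi gi = four_block_mat P Q R S * Mmat r sj tj fj gj \<longleftrightarrow>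
    P = delta_mat (r - 1) ti * Tprime r si ti * delta'_mat (r - 1) tj \<and>
    R = Tsecond r fi gi ti * delta'_mat (r - 1) tj \<and>
    Q * col2 fj gj = (-1) ^ tj \<cdot>\<^sub>m (delta_mat (r - 1) ti * Tprime r si ti * svec r sj) \<and>
    S * col2 fj gj = ((-1) ^ tj * sj ti) \<cdot>\<^sub>m col2 fi gi"
proof -
  have sign: "(-1::'a) ^ tj * (-1) ^ tj = 1"
    by (simp flip: power_add)
  have "tj - 1 < r - 1" and "Suc (tj - 1) = tj"
    using tj by auto
  then have unit: "svec r sj $$ (tj - 1, 0) * (-1) ^ tj = 1"
    using pivot sign by (simp add: index_svec)
  have ZMj: "four_block_mat P Q R S * Mmat r sj tj fj gj \<in> carrier_mat r (r - 1)"
    using four_block_mat_carrier_minus_2[OF r P S] Mmat_carrier[OF r] by (rule mult_carrier_mat)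
  have blocks: "delta_mat (r - 1) ti * Tprime r si ti * delta'_mat (r - 1) tj \<in> carrier_mat (r - 2) (r - 2)"
    "Tsecond r fi gi ti * delta'_mat (r - 1) tj \<in> carrier_mat 2 (r - 2)"
    "delta_mat (r - 1) ti * Tprime r si ti * svec r sj \<in> carrier_mat (r - 2) 1"
    "sj ti \<cdot>\<^sub>m col2 fi gi \<in> carrier_mat 2 1"
    "(-1) ^ tj \<cdot>\<^sub>m (Q * col2 fj gj) \<in> carrier_mat (r - 2) 1"
    "(-1) ^ tj \<cdot>\<^sub>m (S * col2 fj gj) \<in> carrier_mat 2 1"
    using Q S by (auto intro!: carrier_matI)
  have "Mmat r si ti fi gi = four_block_mat P Q R S * Mmat r sj tj fj gj \<longleftrightarrow>
      delta_mat (r - 1) ti * Tprime r si ti * delta'_mat (r - 1) tj = P \<and>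
      Tsecond r fi gi ti * delta'_mat (r - 1) tj = R \<and>
      delta_mat (r - 1) ti * Tprime r si ti * svec r sj = (-1) ^ tj \<cdot>\<^sub>m (Q * col2 fj gj) \<and>
      sj ti \<cdot>\<^sub>m col2 fi gi = (-1) ^ tj \<cdot>\<^sub>m (S * col2 fj gj)"
    using mat_eq_iff_mult_delta'_mat_and_col[OF Mmat_carrier[OF r, of si ti fi gi] ZMj tj svec_carrier unit]
    unfolding Mmat_mult_delta'_mat Mmat_mult_svec[OF ti]
      four_block_mult_Mmat_mult_delta'_mat[OF r P Q R S]
      four_block_mult_Mmat_mult_svec[where s = sj, OF r tj pivot P Q R S]
      append_rows_eq_iff[OF blocks(1) P blocks(2) R] append_rows_eq_iff[OF blocks(3,5,4,6)]
    by (simp only: conj_assoc)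
  moreover have "delta_mat (r - 1) ti * Tprime r si ti * svec r sj = (-1) ^ tj \<cdot>\<^sub>m (Q * col2 fj gj)
      \<longleftrightarrow> Q * col2 fj gj = (-1) ^ tj \<cdot>\<^sub>m (delta_mat (r - 1) ti * Tprime r si ti * svec r sj)"
    using eq_smult_mat_iff_involutive[OF sign] by metis
  moreover have "sj ti \<cdot>\<^sub>m col2 fi gi = (-1) ^ tj \<cdot>\<^sub>m (S * col2 fj gj)
      \<longleftrightarrow> S * col2 fj gj = ((-1) ^ tj * sj ti) \<cdot>\<^sub>m col2 fi gi"
    using eq_smult_mat_iff_involutive[OF sign] smult_smult_mat by metis
  ultimately show ?thesis
    by auto
qed

lemma index_mult_col2:
  fixes Q :: "'a::comm_ring_1 mat"
  assumes "Q \<in> carrier_mat m 2" and "a < m"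
  shows "(Q * col2 f g) $$ (a, 0) = Q $$ (a, 0) * f + Q $$ (a, 1) * g"
  using assms by (simp add: scalar_prod_def numeral_2_eq_2 index_col2)

lemma exists_mult_col2_eq:
  fixes V :: "'a::comm_ring_1 mat"
  assumes V: "V \<in> carrier_mat m 1"
    and span: "\<And>a. a < m \<Longrightarrow> V $$ (a, 0) \<in> {x * f + y * g |x y. True}"
  shows "\<exists>Q \<in> carrier_mat m 2. Q * col2 f g = V"
proof -
  have "\<forall>a. \<exists>x y. a < m \<longrightarrow> V $$ (a, 0) = x * f + y * g"
    using span by blast
  then obtain x y where xy: "\<And>a. a < m \<Longrightarrow> V $$ (a, 0) = x a * f + y a * g"
    by metis
  define Q where "Q = mat m 2 (\<lambda>(a, c). if c = 0 then x a else y a)"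
  have Q: "Q \<in> carrier_mat m 2"
    by (simp add: Q_def)
  have "Q * col2 f g = V"
  proof (rule eq_matI)
    fix a j assume "a < dim_row V" and "j < dim_col V"
    then show "(Q * col2 f g) $$ (a, j) = V $$ (a, j)"
      using V index_mult_col2[OF Q, of a f g] xy[of a] by (simp add: Q_def)
  qed (use V Q in auto)
  with Q show ?thesis
    by blast
qed

lemma exists_mult_col2_eq_delta_Tprime_mult_svec:
  fixes si sj :: "nat \<Rightarrow> 'a::comm_ring_1"
  assumes ti: "ti \<in> {1..r - 1}"
    and congr: "\<And>t. t \<in> {1..r - 1} \<Longrightarrow> si t - (-1) ^ ti * u * sj t \<in> {x * f + y * g |x y. True}"
    and unit: "sj ti * u = 1"
  shows "\<exists>Q \<in> carrier_mat (r - 2) 2.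
    Q * col2 f g = c \<cdot>\<^sub>m (delta_mat (r - 1) ti * Tprime r si ti * svec r sj)"
proof (rule exists_mult_col2_eq)
  show "c \<cdot>\<^sub>m (delta_mat (r - 1) ti * Tprime r si ti * svec r sj) \<in> carrier_mat (r - 2) 1"
    unfolding delta_Tprime_mult_svec[OF ti] by simp
  fix a assume a: "a < r - 2"
  define t where "t = Suc (insert_index (ti - 1) a)"
  have "insert_index (ti - 1) a < r - 1"
    by (rule insert_index_less) (use a in simp)
  then have "t \<in> {1..r - 1}"
    by (simp add: t_def)
  then obtain x y where xy: "si t - (-1) ^ ti * u * sj t = x * f + y * g"
    using congr by blast
  have sign: "(-1::'a) ^ ti * (-1) ^ ti = 1"
    by (simp flip: power_add)
  have "c * (sj t - (-1) ^ ti * si t * sj ti)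
      = c * (sj t * (1 - ((-1) ^ ti * (-1) ^ ti) * (sj ti * u))
        - (-1) ^ ti * sj ti * (si t - (-1) ^ ti * u * sj t))"
    by (simp add: algebra_simps)
  also have "\<dots> = (- (c * (-1) ^ ti * sj ti * x)) * f + (- (c * (-1) ^ ti * sj ti * y)) * g"
    unfolding sign unit xy by (simp add: algebra_simps)
  finally have combination: "c * (sj t - (-1) ^ ti * si t * sj ti)
      = (- (c * (-1) ^ ti * sj ti * x)) * f + (- (c * (-1) ^ ti * sj ti * y)) * g" .
  have "(c \<cdot>\<^sub>m (delta_mat (r - 1) ti * Tprime r si ti * svec r sj)) $$ (a, 0)
      = c * (sj t - (-1) ^ ti * si t * sj ti)"
    unfolding delta_Tprime_mult_svec[OF ti] using a by (simp add: t_def)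
  then show "(c \<cdot>\<^sub>m (delta_mat (r - 1) ti * Tprime r si ti * svec r sj)) $$ (a, 0)
      \<in> {x * f + y * g |x y. True}"
    unfolding combination by blast
qed

section \<open>The determinant of the transition matrix\<close>

text \<open>\<open>T'\<close> bordered by \<open>Q\<close> (with a zero row inserted at the pivot \<open>t - 1\<close>), \<open>T''\<close> and \<open>S\<close>;
  deleting row \<open>t_i - 1\<close> and column \<open>t_j - 1\<close> gives the matrix \<open>Z\<close> described by (i) and (ii).\<close>

definition Tprime_border ::
    "nat \<Rightarrow> (nat \<Rightarrow> 'a) \<Rightarrow> nat \<Rightarrow> 'a \<Rightarrow> 'a \<Rightarrow> 'a mat \<Rightarrow> 'a mat \<Rightarrow> 'a::comm_ring_1 mat" where
  "Tprime_border r s t f g Q S = four_block_mat (Tprime r s t)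
    (mat (r - 1) 2 (\<lambda>(x, c). if x = t - 1 then 0 else Q $$ (delete_index (t - 1) x, c)))
    (Tsecond r f g t) S"

lemma dim_Tprime_border [simp]:
  "dim_row (Tprime_border r s t f g Q S) = r - 1 + dim_row S"
  "dim_col (Tprime_border r s t f g Q S) = r - 1 + dim_col S"
  unfolding Tprime_border_def by simp_all

lemma Tprime_border_carrier:
  "S \<in> carrier_mat 2 2 \<Longrightarrow> Tprime_border r s t f g Q S \<in> carrier_mat (r - 1 + 2) (r - 1 + 2)"
  unfolding Tprime_border_def by (rule four_block_carrier_mat[OF Tprime_carrier])

lemma index_Tprime_border_unit_col:
  assumes "S \<in> carrier_mat 2 2" and "a < r - 1 + 2" and "b < r - 1" and "b \<noteq> t - 1"
  shows "Tprime_border r s t f g Q S $$ (a, b) = (if a = b then 1 else 0)"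
  using assms by (auto simp: Tprime_border_def index_Tprime index_Tsecond)

lemma four_block_delta_Tprime_eq_mat_delete:
  fixes s :: "nat \<Rightarrow> 'a::comm_ring_1"
  assumes r: "2 \<le> r" and ti: "ti \<in> {1..r - 1}" and tj: "tj \<in> {1..r - 1}"
    and Q: "Q \<in> carrier_mat (r - 2) 2" and S: "S \<in> carrier_mat 2 2"
  shows "four_block_mat (delta_mat (r - 1) ti * Tprime r s ti * delta'_mat (r - 1) tj) Q
      (Tsecond r f g ti * delta'_mat (r - 1) tj) S
    = mat_delete (Tprime_border r s ti f g Q S) (ti - 1) (tj - 1)"
  unfolding delta_mat_mult_delta'_mat[OF Tprime_carrier] mult_delta'_mat[OF Tsecond_carrier]
proof (rule eq_matI)
  obtain n where n: "r = Suc (Suc n)"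
    using r by (metis add_2_eq_Suc le_Suc_ex)
  fix x y assume "x < dim_row (mat_delete (Tprime_border r s ti f g Q S) (ti - 1) (tj - 1))"
    and "y < dim_col (mat_delete (Tprime_border r s ti f g Q S) (ti - 1) (tj - 1))"
  then have x: "x < Suc (Suc n)" and y: "y < Suc (Suc n)"
    using S n by auto
  have row: "insert_index (ti - 1) x < Suc n \<longleftrightarrow> x < n"
    "\<not> x < n \<Longrightarrow> insert_index (ti - 1) x = Suc x"
    and col: "insert_index (tj - 1) y < Suc n \<longleftrightarrow> y < n"
    "\<not> y < n \<Longrightarrow> insert_index (tj - 1) y = Suc y"
    using ti tj n by (auto simp: insert_index_def)
  have "mat_delete (Tprime_border r s ti f g Q S) (ti - 1) (tj - 1) $$ (x, y)
      = Tprime_border r s ti f g Q S $$ (insert_index (ti - 1) x, insert_index (tj - 1) y)"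
    using S x y n by simp
  then show "four_block_mat (mat_delete (Tprime r s ti) (ti - 1) (tj - 1)) Q
      (mat 2 (r - 1 - 1) (\<lambda>(a, b). Tsecond r f g ti $$ (a, insert_index (tj - 1) b))) S $$ (x, y)
    = mat_delete (Tprime_border r s ti f g Q S) (ti - 1) (tj - 1) $$ (x, y)"
    using x y Q S row col insert_index_neq[of "ti - 1" x]
    by (cases "x < n"; cases "y < n") (simp_all add: Tprime_border_def n)
qed (use Q S r in auto)

lemma submat_Tprime_border_corner:
  "S \<in> carrier_mat 2 2 \<Longrightarrow> submat (Tprime_border r s t f g Q S) [r - 1, r - 1 + 1] [r - 1, r - 1 + 1] = S"
  by (intro eq_matI) (auto simp: Tprime_border_def submat_def less_2_cases_iff)

lemma submat_Tprime_border:
  fixes s :: "nat \<Rightarrow> 'a::comm_ring_1"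
  assumes r: "2 \<le> r" and ti: "ti \<in> {1..r - 1}" and tj: "tj \<in> {1..r - 1}" and "ti \<noteq> tj"
    and Q: "Q \<in> carrier_mat (r - 2) 2" and S: "S \<in> carrier_mat 2 2"
  shows "submat (Tprime_border r s ti f g Q S) [tj - 1, r - 1, r - 1 + 1] [ti - 1, r - 1, r - 1 + 1]
    = four_block_mat (mat 1 1 (\<lambda>_. - ((-1) ^ ti * s tj)))
        (mat 1 2 (\<lambda>(_, c). Q $$ (delete_index (ti - 1) (tj - 1), c))) (col2 f g) S"
proof -
  obtain n where n: "r = Suc (Suc n)"
    using r by (metis add_2_eq_Suc le_Suc_ex)
  let ?B = "Tprime_border r s ti f g Q S"
  have dims: "dim_row S = 2" "dim_col S = 2" "dim_row Q = n" "dim_col Q = 2"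
    using Q S n by auto
  have "ti - 1 < Suc n" "tj - 1 < Suc n" "Suc (tj - 1) = tj" "ti - 1 \<noteq> tj - 1"
    using ti tj \<open>ti \<noteq> tj\<close> n by auto
  have "?B $$ (tj - 1, ti - 1) = - ((-1) ^ ti * s tj)"
    "?B $$ (tj - 1, Suc n) = Q $$ (delete_index (ti - 1) (tj - 1), 0)"
    "?B $$ (tj - 1, Suc (Suc n)) = Q $$ (delete_index (ti - 1) (tj - 1), 1)"
    "?B $$ (Suc n, ti - 1) = f" "?B $$ (Suc (Suc n), ti - 1) = g"
    "?B $$ (Suc n, Suc n) = S $$ (0, 0)" "?B $$ (Suc n, Suc (Suc n)) = S $$ (0, 1)"
    "?B $$ (Suc (Suc n), Suc n) = S $$ (1, 0)" "?B $$ (Suc (Suc n), Suc (Suc n)) = S $$ (1, 1)"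
    using ti tj \<open>ti \<noteq> tj\<close> dims n \<open>ti - 1 < Suc n\<close> \<open>tj - 1 < Suc n\<close>
      \<open>Suc (tj - 1) = tj\<close> \<open>ti - 1 \<noteq> tj - 1\<close>
    by (simp_all add: Tprime_border_def index_Tprime index_Tsecond)
  then show ?thesis
    using dims n by (intro eq_matI) (auto simp: submat_def index_col2 numeral_3_eq_3 less_Suc_eq)
qed

lemma det_four_block_delta_Tprime:
  fixes s :: "nat \<Rightarrow> 'a::comm_ring_1"
  assumes r: "2 \<le> r" and ti: "ti \<in> {1..r - 1}" and tj: "tj \<in> {1..r - 1}"
    and Q: "Q \<in> carrier_mat (r - 2) 2" and S: "S \<in> carrier_mat 2 2"
  shows "det (four_block_mat (delta_mat (r - 1) ti * Tprime r s ti * delta'_mat (r - 1) tj) Q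
      (Tsecond r f g ti * delta'_mat (r - 1) tj) S)
    = (if ti = tj then det S
       else (-1) ^ (ti + tj + 1) * det (four_block_mat (mat 1 1 (\<lambda>_. - ((-1) ^ ti * s tj)))
         (mat 1 2 (\<lambda>(_, c). Q $$ (delete_index (ti - 1) (tj - 1), c))) (col2 f g) S))"
proof -
  have "ti - 1 < r - 1" "tj - 1 < r - 1"
    using ti tj by auto
  have det_B: "det (mat_delete (Tprime_border r s ti f g Q S) (ti - 1) (tj - 1))
      = (if ti - 1 = tj - 1 then det (submat (Tprime_border r s ti f g Q S) [r - 1, r - 1 + 1] [r - 1, r - 1 + 1])
         else (-1) ^ (ti - 1 + (tj - 1) + 1)
           * det (submat (Tprime_border r s ti f g Q S) [tj - 1, r - 1, r - 1 + 1] [ti - 1, r - 1, r - 1 + 1]))"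
    by (rule det_mat_delete_of_unit_cols[OF Tprime_border_carrier[OF S] \<open>ti - 1 < r - 1\<close> \<open>tj - 1 < r - 1\<close>
          index_Tprime_border_unit_col[OF S]])
  show ?thesis
  proof (cases "ti = tj")
    case True
    then show ?thesis
      using det_B
      unfolding four_block_delta_Tprime_eq_mat_delete[OF r ti tj Q S] submat_Tprime_border_corner[OF S]
      by simp
  next
    case False
    have "ti - 1 + (tj - 1) + 1 + 2 = ti + tj + 1"
      using ti tj by auto
    then have "(-1::'a) ^ (ti - 1 + (tj - 1) + 1 + 2) = (-1) ^ (ti + tj + 1)"
      by (simp only:)
    then have "(-1::'a) ^ (ti - 1 + (tj - 1) + 1) = (-1) ^ (ti + tj + 1)"
      by (simp add: power_add)
    moreover have "ti - 1 \<noteq> tj - 1"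
      using ti tj False by auto
    ultimately show ?thesis
      using det_B False
      unfolding four_block_delta_Tprime_eq_mat_delete[OF r ti tj Q S]
        submat_Tprime_border[OF r ti tj False Q S]
      by simp
  qed
qed

lemma index_mult_col2_delete_index:
  fixes si sj :: "nat \<Rightarrow> 'a::comm_ring_1"
  assumes ti: "ti \<in> {1..r - 1}" and tj: "tj \<in> {1..r - 1}" and "ti \<noteq> tj"
    and Q: "Q \<in> carrier_mat (r - 2) 2"
    and Q_rel: "Q * col2 f g = c \<cdot>\<^sub>m (delta_mat (r - 1) ti * Tprime r si ti * svec r sj)"
  shows "Q $$ (delete_index (ti - 1) (tj - 1), 0) * f + Q $$ (delete_index (ti - 1) (tj - 1), 1) * g
    = c * (sj tj - (-1) ^ ti * si tj * sj ti)"
proof -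
  define a where "a = delete_index (ti - 1) (tj - 1)"
  have a: "a < r - 2" and "insert_index (ti - 1) a = tj - 1" and "Suc (tj - 1) = tj"
    using ti tj \<open>ti \<noteq> tj\<close> by (auto simp: a_def delete_index_def insert_index_def)
  then show ?thesis
    using arg_cong[OF Q_rel, of "\<lambda>M. M $$ (a, 0)"]
    unfolding index_mult_col2[OF Q a] delta_Tprime_mult_svec[OF ti] by (simp add: a_def)
qed

lemma det_four_block_delta_Tprime_smult:
  fixes si sj :: "nat \<Rightarrow> 'a::comm_ring_1" and A :: "'a mat"
  assumes r: "2 \<le> r" and ti: "ti \<in> {1..r - 1}" and tj: "tj \<in> {1..r - 1}"
    and A: "A \<in> carrier_mat 2 2" and A_rel: "col2 fi gi = A * col2 fj gj"
    and pivot: "sj tj = (-1) ^ tj" and unit: "sj ti * u = 1" and det_A: "det A = (-1) ^ ti * h * u"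
    and Q: "Q \<in> carrier_mat (r - 2) 2"
    and Q_rel: "Q * col2 fj gj = (-1) ^ tj \<cdot>\<^sub>m (delta_mat (r - 1) ti * Tprime r si ti * svec r sj)"
  shows "det (four_block_mat (delta_mat (r - 1) ti * Tprime r si ti * delta'_mat (r - 1) tj) Q
    (Tsecond r fi gi ti * delta'_mat (r - 1) tj) (((-1) ^ tj * sj ti) \<cdot>\<^sub>m A)) = h"
proof -
  have sign_i: "(-1::'a) ^ ti * (-1) ^ ti = 1" and sign_j: "(-1::'a) ^ tj * (-1) ^ tj = 1"
    by (simp_all flip: power_add)
  have S: "((-1) ^ tj * sj ti) \<cdot>\<^sub>m A \<in> carrier_mat 2 2"
    using A by simp
  have det_S: "det (((-1) ^ tj * sj ti) \<cdot>\<^sub>m A) = (-1) ^ ti * sj ti * h"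
    by (rule det_smult_mat_2x2[OF A unit det_A sign_j])
  show ?thesis
  proof (cases "ti = tj")
    case True
    then show ?thesis
      unfolding det_four_block_delta_Tprime[OF r ti tj Q S] det_S
      using pivot sign_j by (simp add: mult.assoc[symmetric])
  next
    case False
    define a where "a = delete_index (ti - 1) (tj - 1)"
    have "Q $$ (a, 0) * fj + Q $$ (a, 1) * gj = (-1) ^ tj * (sj tj - (-1) ^ ti * si tj * sj ti)"
      unfolding a_def by (rule index_mult_col2_delete_index[OF ti tj False Q Q_rel])
    then have border: "(-1) ^ tj * sj ti * - ((-1) ^ ti * si tj) - (Q $$ (a, 0) * fj + Q $$ (a, 1) * gj)
        = - 1"
      using pivot sign_j by (simp add: algebra_simps)
    have "det (four_block_mat (mat 1 1 (\<lambda>_. - ((-1) ^ ti * si tj)))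
        (mat 1 2 (\<lambda>(_, c). Q $$ (a, c))) (col2 fi gi) (((-1) ^ tj * sj ti) \<cdot>\<^sub>m A))
        = (-1) ^ tj * sj ti * ((-1) ^ ti * h * u) * - 1"
      unfolding det_bordered_smult_mat[OF A A_rel] det_A border ..
    also have "\<dots> = - ((-1) ^ tj * (-1) ^ ti * h * (sj ti * u))"
      by (simp add: algebra_simps)
    finally have "det (four_block_mat (mat 1 1 (\<lambda>_. - ((-1) ^ ti * si tj)))
        (mat 1 2 (\<lambda>(_, c). Q $$ (a, c))) (col2 fi gi) (((-1) ^ tj * sj ti) \<cdot>\<^sub>m A))
        = - ((-1) ^ tj * (-1) ^ ti * h)"
      by (simp add: unit)
    moreover have "(-1::'a) ^ (ti + tj + 1) = - ((-1) ^ ti * (-1) ^ tj)"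
      by (simp add: power_add)
    ultimately show ?thesis
      unfolding det_four_block_delta_Tprime[OF r ti tj Q S]
      using False sign_i sign_j by (simp add: a_def algebra_simps)
  qed
qed

theorem lemma4:
  fixes r ti tj :: nat
    and fi gi fj gj h hinv u :: "'a::comm_ring_1"
    and si sj :: "nat \<Rightarrow> 'a"
    and A :: "'a mat"
    and J :: "'a set"
  assumes r: "r \<ge> 2"
    and ti: "ti \<in> {1..r-1}" and tj: "tj \<in> {1..r-1}"
    \<comment> \<open>(b): f,g generate the ideal J of Y on the affine open U_i \<inter> U_j,
        and the Koszul-type condition on this open\<close>
    and J_i: "J = {a * fi + b * gi | a b. True}"
    and J_j: "J = {a * fj + b * gj | a b. True}"
    and kos_i: "\<And>x y. x * fi = y * gi \<Longrightarrow> \<exists>w. x = w * gi \<and> y = w * fi"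
    and kos_j: "\<And>x y. x * fj = y * gj \<Longrightarrow> \<exists>w. x = w * gj \<and> y = w * fj"
    \<comment> \<open>(a): h = h_ij is a unit with inverse hinv\<close>
    and h_unit: "h * hinv = 1"
    \<comment> \<open>(c)\<close>
    and A: "A \<in> carrier_mat 2 2"
    and A_rel: "col2 fi gi = A * col2 fj gj"
    \<comment> \<open>(d): s_it = (det A / h) s_jt modulo the ideal of Y\<close>
    and d: "\<And>t. t \<in> {1..r-1} \<Longrightarrow> si t - det A * hinv * sj t \<in> J"
    \<comment> \<open>(e)\<close>
    and e_i: "si ti = (-1) ^ ti" and e_j: "sj tj = (-1) ^ tj"
    and s_unit: "sj ti * u = 1"
    and detA: "det A = (-1) ^ ti * h * u"
  shows
    "(\<forall>P Q R S. P \<in> carrier_mat (r-2) (r-2) \<longrightarrow> Q \<in> carrier_mat (r-2) 2 \<longrightarrow>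
        R \<in> carrier_mat 2 (r-2) \<longrightarrow> S \<in> carrier_mat 2 2 \<longrightarrow>
        (Mmat r si ti fi gi = four_block_mat P Q R S * Mmat r sj tj fj gj \<longleftrightarrow>
           P = delta_mat (r-1) ti * Tprime r si ti * delta'_mat (r-1) tj \<and>
           R = Tsecond r fi gi ti * delta'_mat (r-1) tj \<and>
           Q * col2 fj gj = ((-1) ^ tj) \<cdot>\<^sub>m (delta_mat (r-1) ti * Tprime r si ti * svec r sj) \<and>
           S * col2 fj gj = ((-1) ^ tj * sj ti) \<cdot>\<^sub>m col2 fi gi))
     \<and> (((-1) ^ tj * sj ti) \<cdot>\<^sub>m A) * col2 fj gj = ((-1) ^ tj * sj ti) \<cdot>\<^sub>m col2 fi gi
     \<and> (\<exists>P Q R. P \<in> carrier_mat (r-2) (r-2) \<and> Q \<in> carrier_mat (r-2) 2 \<and>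
          R \<in> carrier_mat 2 (r-2) \<and>
          Mmat r si ti fi gi = four_block_mat P Q R (((-1) ^ tj * sj ti) \<cdot>\<^sub>m A) * Mmat r sj tj fj gj)
     \<and> (\<forall>P Q R. P \<in> carrier_mat (r-2) (r-2) \<longrightarrow> Q \<in> carrier_mat (r-2) 2 \<longrightarrow>
          R \<in> carrier_mat 2 (r-2) \<longrightarrow>
          P = delta_mat (r-1) ti * Tprime r si ti * delta'_mat (r-1) tj \<longrightarrow>
          R = Tsecond r fi gi ti * delta'_mat (r-1) tj \<longrightarrow>
          Q * col2 fj gj = ((-1) ^ tj) \<cdot>\<^sub>m (delta_mat (r-1) ti * Tprime r si ti * svec r sj) \<longrightarrow>
          det (((-1) ^ tj * sj ti) \<cdot>\<^sub>m A) = (-1) ^ ti * sj ti * h \<and>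
          det (four_block_mat P Q R (((-1) ^ tj * sj ti) \<cdot>\<^sub>m A)) = h)"
proof -
  \<comment> \<open>The Koszul conditions \<open>kos_i\<close>, \<open>kos_j\<close>, the description \<open>J_i\<close> and \<open>e_i\<close> are not needed.\<close>
  note transition_iff = Mmat_eq_four_block_mult_Mmat_iff[where sj = sj, OF r ti tj e_j]
  have sign_j: "(-1::'a) ^ tj * (-1) ^ tj = 1"
    by (simp flip: power_add)
  have S_rel: "(((-1) ^ tj * sj ti) \<cdot>\<^sub>m A) * col2 fj gj = ((-1) ^ tj * sj ti) \<cdot>\<^sub>m col2 fi gi"
    using A_rel by (simp add: mult_smult_assoc_mat[OF A col2_carrier])
  have "det A * hinv = (-1) ^ ti * u * (h * hinv)"
    by (simp add: detA algebra_simps)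
  then have "si t - (-1) ^ ti * u * sj t \<in> {x * fj + y * gj |x y. True}" if "t \<in> {1..r - 1}" for t
    using d[OF that] J_j h_unit by simp
  then obtain Q where Q: "Q \<in> carrier_mat (r - 2) 2"
    and Q_rel: "Q * col2 fj gj = (-1) ^ tj \<cdot>\<^sub>m (delta_mat (r - 1) ti * Tprime r si ti * svec r sj)"
    using exists_mult_col2_eq_delta_Tprime_mult_svec[where si = si and sj = sj, OF ti _ s_unit]
    by blast
  have P_ij: "delta_mat (r - 1) ti * Tprime r si ti * delta'_mat (r - 1) tj \<in> carrier_mat (r - 2) (r - 2)"
    and R_ij: "Tsecond r fi gi ti * delta'_mat (r - 1) tj \<in> carrier_mat 2 (r - 2)"
    by (auto intro!: carrier_matI)
  have "Mmat r si ti fi gi = four_block_mat (delta_mat (r - 1) ti * Tprime r si ti * delta'_mat (r - 1) tj)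
      Q (Tsecond r fi gi ti * delta'_mat (r - 1) tj) (((-1) ^ tj * sj ti) \<cdot>\<^sub>m A) * Mmat r sj tj fj gj"
    using transition_iff[OF P_ij Q R_ij smult_carrier_mat[OF A]] Q_rel S_rel by simp
  then show ?thesis
    using transition_iff S_rel P_ij Q R_ij det_smult_mat_2x2[OF A s_unit detA sign_j]
      det_four_block_delta_Tprime_smult[where sj = sj, OF r ti tj A A_rel e_j s_unit detA]
    by blast
qed

end
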